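(* Let $n\ge0$, $k\ge1$ and $1\le j\le k$. Then for every formula $\alpha$, $\vdash_{L_n^k}\circ^j\alpha\leftrightarrow\circ^j\neg\alpha$.
   Context: Formulas are built from a countable set of propositional variables using unary $\neg,\circ$ and binary $\land,\lor,\to$; $\circ^0\alpha=\alpha$, $\circ^{m+1}\alpha=\circ(\circ^m\alpha)$, $\alpha\leftrightarrow\beta:=(\alpha\to\beta)\land(\beta\to\alpha)$. mbC is the Hilbert calculus with the axiom schemas of a standard axiomatization of positive classical propositional logic in $\land,\lor,\to$, plus (TND) $\alpha\lor\neg\alpha$ and (bc1) $\circ\alpha\to(\alpha\to(\neg\alpha\to\beta))$, modus ponens being the only rule; mbCciw is mbC plus (ciw) $\circ\alpha\lor(\alpha\land\neg\alpha)$. For $n\ge0$, $k\ge1$, $L_n^k$ is mbCciw plus (cc$^n$) $\circ^{n+2}\alpha$, (dn) $\neg\neg\alpha\leftrightarrow\alpha$, and (ip$^j$) $\neg\circ^j\neg\alpha\leftrightarrow\neg\circ^j\alpha$ for each $1\le j<k$. $\vdash_L$ denotes derivability in $L$. *)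

theory Defs
  imports Main
begin

datatype fm =
    Var nat
  | Neg fm
  | Circ fm
  | Conj fm fm
  | Disj fm fm
  | Imp fm fm

definition Iff :: "fm \<Rightarrow> fm \<Rightarrow> fm" where
  "Iff a b = Conj (Imp a b) (Imp b a)"

fun circ_pow :: "nat \<Rightarrow> fm \<Rightarrow> fm" where
  "circ_pow 0 a = a"
| "circ_pow (Suc m) a = Circ (circ_pow m a)"

text \<open>Axiom schemas of positive classical propositional logic (the standard
  axiomatization used for mbC by Carnielli and Coniglio), plus TND and bc1.\<close>

inductive mbC_axiom :: "fm \<Rightarrow> bool" where
  Ax1: "mbC_axiom (Imp a (Imp b a))"
| Ax2: "mbC_axiom (Imp (Imp a b) (Imp (Imp a (Imp b c)) (Imp a c)))"
| Ax3: "mbC_axiom (Imp a (Imp b (Conj a b)))"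
| Ax4: "mbC_axiom (Imp (Conj a b) a)"
| Ax5: "mbC_axiom (Imp (Conj a b) b)"
| Ax6: "mbC_axiom (Imp a (Disj a b))"
| Ax7: "mbC_axiom (Imp b (Disj a b))"
| Ax8: "mbC_axiom (Imp (Imp a c) (Imp (Imp b c) (Imp (Disj a b) c)))"
| Ax9: "mbC_axiom (Disj a (Imp a b))"
| TND: "mbC_axiom (Disj a (Neg a))"
| bc1: "mbC_axiom (Imp (Circ a) (Imp a (Imp (Neg a) b)))"

inductive L_axiom :: "nat \<Rightarrow> nat \<Rightarrow> fm \<Rightarrow> bool" for n k where
  mbC: "mbC_axiom a \<Longrightarrow> L_axiom n k a"
| ciw: "L_axiom n k (Disj (Circ a) (Conj a (Neg a)))"
| cc: "L_axiom n k (circ_pow (n + 2) a)"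
| dn: "L_axiom n k (Iff (Neg (Neg a)) a)"
| ip: "1 \<le> j \<Longrightarrow> j < k \<Longrightarrow> L_axiom n k (Iff (Neg (circ_pow j (Neg a))) (Neg (circ_pow j a)))"

inductive L_derivable :: "nat \<Rightarrow> nat \<Rightarrow> fm \<Rightarrow> bool" for n k where
  ax: "L_axiom n k a \<Longrightarrow> L_derivable n k a"
| mp: "L_derivable n k a \<Longrightarrow> L_derivable n k (Imp a b) \<Longrightarrow> L_derivable n k b"

end

theory Submission
  imports Defs
begin

text \<open>In mbCciw the operator \<open>\<circ>\<close> is antitone with respect to contradictions:
  if \<open>\<beta> \<and> \<not>\<beta> \<turnstile> \<delta> \<and> \<not>\<delta>\<close> then \<open>\<circ>\<delta> \<turnstile> \<circ>\<beta>\<close>, because by (ciw) either \<open>\<circ>\<beta>\<close> holds or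
  \<open>\<beta> \<and> \<not>\<beta>\<close>, whence \<open>\<delta> \<and> \<not>\<delta>\<close>, which explodes against \<open>\<circ>\<delta>\<close> by (bc1). Hence \<open>\<circ>\<beta>\<close> and
  \<open>\<circ>\<delta>\<close> are equivalent as soon as the contradictions \<open>\<beta> \<and> \<not>\<beta>\<close> and \<open>\<delta> \<and> \<not>\<delta>\<close> are.
  By induction on \<open>j\<close> it remains to see that \<open>\<circ>\<^sup>j\<alpha> \<and> \<not>\<circ>\<^sup>j\<alpha>\<close> and \<open>\<circ>\<^sup>j\<not>\<alpha> \<and> \<not>\<circ>\<^sup>j\<not>\<alpha>\<close> are
  equivalent for \<open>j < k\<close>: for \<open>j = 0\<close> this is (dn) after swapping the conjuncts, and for
  \<open>j \<ge> 1\<close> it follows from the induction hypothesis together with \<open>(ip\<^sup>j)\<close>.\<close>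

context
  fixes n k :: nat
begin

inductive derives :: "fm set \<Rightarrow> fm \<Rightarrow> bool" (infix "\<turnstile>" 50) where
  hyp: "a \<in> \<Gamma> \<Longrightarrow> \<Gamma> \<turnstile> a"
| axiom: "L_axiom n k a \<Longrightarrow> \<Gamma> \<turnstile> a"
| modus_ponens: "\<Gamma> \<turnstile> a \<Longrightarrow> \<Gamma> \<turnstile> Imp a b \<Longrightarrow> \<Gamma> \<turnstile> b"

lemma derives_empty_iff: "{} \<turnstile> a \<longleftrightarrow> L_derivable n k a"
proof
  show "{} \<turnstile> a \<Longrightarrow> L_derivable n k a"
    by (induction "{} :: fm set" a rule: derives.induct) (auto intro: L_derivable.intros)
  show "L_derivable n k a \<Longrightarrow> {} \<turnstile> a"
    by (induction rule: L_derivable.induct) (auto intro: derives.intros)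
qed

lemma derives_mono: "\<Gamma> \<turnstile> a \<Longrightarrow> \<Gamma> \<subseteq> \<Delta> \<Longrightarrow> \<Delta> \<turnstile> a"
  by (induction rule: derives.induct) (auto intro: derives.intros)

lemma derives_insert: "\<Gamma> \<turnstile> a \<Longrightarrow> insert b \<Gamma> \<turnstile> a"
  by (erule derives_mono) auto

lemma derives_hyp_insert: "insert a \<Gamma> \<turnstile> a"
  by (rule hyp) simp

lemma derives_mbC_axiom: "mbC_axiom a \<Longrightarrow> \<Gamma> \<turnstile> a"
  by (intro axiom L_axiom.mbC)

lemma derives_imp_refl: "\<Gamma> \<turnstile> Imp a a"
  using modus_ponens[OF derives_mbC_axiom[OF Ax1]
      modus_ponens[OF derives_mbC_axiom[OF Ax1] derives_mbC_axiom[OF Ax2]]] .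

lemma deduction_theorem: "insert a \<Gamma> \<turnstile> b \<Longrightarrow> \<Gamma> \<turnstile> Imp a b"
proof (induction "insert a \<Gamma>" b rule: derives.induct)
  case (hyp c)
  then consider "c = a" | "c \<in> \<Gamma>" by blast
  then show ?case
    by cases (auto intro: derives_imp_refl modus_ponens[OF derives.hyp derives_mbC_axiom[OF Ax1]])
next
  case (axiom c)
  then show ?case by (blast intro: modus_ponens[OF derives.axiom derives_mbC_axiom[OF Ax1]])
next
  case (modus_ponens c d)
  then show ?case by (blast intro: derives.modus_ponens derives_mbC_axiom[OF Ax2])
qed

lemma derives_conjI: "\<Gamma> \<turnstile> a \<Longrightarrow> \<Gamma> \<turnstile> b \<Longrightarrow> \<Gamma> \<turnstile> Conj a b"
  by (meson modus_ponens derives_mbC_axiom Ax3)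

lemma derives_conjD1: "\<Gamma> \<turnstile> Conj a b \<Longrightarrow> \<Gamma> \<turnstile> a"
  by (meson modus_ponens derives_mbC_axiom Ax4)

lemma derives_conjD2: "\<Gamma> \<turnstile> Conj a b \<Longrightarrow> \<Gamma> \<turnstile> b"
  by (meson modus_ponens derives_mbC_axiom Ax5)

lemma derives_disjE:
  "\<Gamma> \<turnstile> Disj a b \<Longrightarrow> insert a \<Gamma> \<turnstile> c \<Longrightarrow> insert b \<Gamma> \<turnstile> c \<Longrightarrow> \<Gamma> \<turnstile> c"
  by (meson modus_ponens derives_mbC_axiom Ax8 deduction_theorem)

lemma derives_iffI: "insert a \<Gamma> \<turnstile> b \<Longrightarrow> insert b \<Gamma> \<turnstile> a \<Longrightarrow> \<Gamma> \<turnstile> Iff a b"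
  unfolding Iff_def by (intro derives_conjI deduction_theorem)

lemma derives_iffD1: "\<Gamma> \<turnstile> Iff a b \<Longrightarrow> \<Gamma> \<turnstile> a \<Longrightarrow> \<Gamma> \<turnstile> b"
  unfolding Iff_def by (meson derives_conjD1 modus_ponens)

lemma derives_iffD2: "\<Gamma> \<turnstile> Iff a b \<Longrightarrow> \<Gamma> \<turnstile> b \<Longrightarrow> \<Gamma> \<turnstile> a"
  unfolding Iff_def by (meson derives_conjD2 modus_ponens)

lemma derives_Circ_antimono:
  assumes "insert (Conj b (Neg b)) \<Gamma> \<turnstile> Conj d (Neg d)"
  shows "insert (Circ d) \<Gamma> \<turnstile> Circ b"
proof (rule derives_disjE)
  show "insert (Circ d) \<Gamma> \<turnstile> Disj (Circ b) (Conj b (Neg b))"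
    by (intro axiom L_axiom.ciw)
  show "insert (Circ b) (insert (Circ d) \<Gamma>) \<turnstile> Circ b"
    by (rule derives_hyp_insert)
  let ?\<Delta> = "insert (Conj b (Neg b)) (insert (Circ d) \<Gamma>)"
  have contradiction: "?\<Delta> \<turnstile> Conj d (Neg d)"
    using assms by (rule derives_mono) auto
  have explosion: "?\<Delta> \<turnstile> Imp d (Imp (Neg d) (Circ b))"
    by (rule modus_ponens[OF _ derives_mbC_axiom[OF bc1]]) (simp add: hyp)
  show "?\<Delta> \<turnstile> Circ b"
    using explosion derives_conjD1[OF contradiction] derives_conjD2[OF contradiction]
    by (blast intro: modus_ponens)
qed

lemma derives_Circ_cong:
  assumes "\<Gamma> \<turnstile> Iff (Conj b (Neg b)) (Conj d (Neg d))"
  shows "\<Gamma> \<turnstile> Iff (Circ b) (Circ d)"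
proof (rule derives_iffI; rule derives_Circ_antimono)
  show "insert (Conj d (Neg d)) \<Gamma> \<turnstile> Conj b (Neg b)"
    using derives_iffD2[OF derives_insert[OF assms] derives_hyp_insert] .
  show "insert (Conj b (Neg b)) \<Gamma> \<turnstile> Conj d (Neg d)"
    using derives_iffD1[OF derives_insert[OF assms] derives_hyp_insert] .
qed

lemma derives_contradiction_Neg_iff:
  "\<Gamma> \<turnstile> Iff (Conj a (Neg a)) (Conj (Neg a) (Neg (Neg a)))"
proof -
  have dn: "\<Delta> \<turnstile> Iff (Neg (Neg a)) a" for \<Delta>
    by (intro axiom L_axiom.dn)
  show ?thesis
    by (rule derives_iffI; rule derives_conjI)
      (meson dn derives_iffD1 derives_iffD2 derives_conjD1 derives_conjD2 derives_hyp_insert)+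
qed

lemma derives_circ_pow_Neg_iff:
  assumes "1 \<le> j" and "j \<le> k"
  shows "\<Gamma> \<turnstile> Iff (circ_pow j a) (circ_pow j (Neg a))"
  using assms
proof (induction j arbitrary: \<Gamma> rule: nat_induct_at_least)
  case base
  show ?case
    using derives_Circ_cong[OF derives_contradiction_Neg_iff] by simp
next
  case (Suc j)
  let ?b = "circ_pow j a" and ?d = "circ_pow j (Neg a)"
  have IH: "\<Delta> \<turnstile> Iff ?b ?d" for \<Delta>
    using Suc by simp
  have ip: "\<Delta> \<turnstile> Iff (Neg ?d) (Neg ?b)" for \<Delta>
    using Suc by (intro axiom L_axiom.ip) auto
  have "\<Gamma> \<turnstile> Iff (Conj ?b (Neg ?b)) (Conj ?d (Neg ?d))"
    by (rule derives_iffI; rule derives_conjI)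
      (meson IH ip derives_iffD1 derives_iffD2 derives_conjD1 derives_conjD2 derives_hyp_insert)+
  then show ?case
    using derives_Circ_cong by simp
qed

end

theorem theorem26:
  fixes n k j :: nat and \<alpha> :: fm
  assumes "1 \<le> k" and "1 \<le> j" and "j \<le> k"
  shows "L_derivable n k (Iff (circ_pow j \<alpha>) (circ_pow j (Neg \<alpha>)))"
  using derives_circ_pow_Neg_iff[OF assms(2,3)] derives_empty_iff by blast

end
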